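(* Let $C$ be a homogeneous lift of a marked point $c\in\mathbb{C}(t)$ with $c\notin\{0,1,t,\infty\}$. Set $F_1=F_{t_1,t_2}(C)/\gcd(F_{t_1,t_2}(C))=:(P_1,Q_1)$. Then $d:=\deg F_1\ge2$, $P_1(0,1)\ne0$, $P_1(1,0)\ne0$, $P_1(1,1)\ne Q_1(1,1)$, and $Q_1(1,0)=0$. Furthermore, for all $n\ge1$, the map $F_{n+1}=F_{t_1,t_2}(F_n)/t_2^2$ has nonzero resultant and degree $\deg F_{n+1}=4^nd$.
   Context: $F_{t_1,t_2}(z,w)=\big((t_1w^2-t_2z^2)^2,\;4t_2zw(w-z)(t_1w-t_2z)\big)$. A homogeneous lift of $c$ is a pair $C=(c_1,c_2)$ of homogeneous polynomials in $(t_1,t_2)$ of the same degree with no common factor such that $c(t)=c_1(t,1)/c_2(t,1)$. For a pair $F=(P,Q)$ of homogeneous polynomials of the same degree, $\deg F$ is that degree, $\gcd(F)$ is the gcd of $P,Q$, $F_{t_1,t_2}(F)$ means substituting $(z,w)=(P,Q)$, and the resultant is that of the pair $(P,Q)$ (Sylvester determinant). *)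

theory Defs
  imports "HOL-Computational_Algebra.Computational_Algebra" "HOL-Computational_Algebra.Field_as_Ring" "Subresultants.Resultant_Prelim"
begin

text \<open>Bivariate polynomials in (t1,t2) over the complex numbers are represented as
  complex poly poly: the outer variable is t2, the coefficients are polynomials in t1.\<close>

type_synonym bipoly = "complex poly poly"

definition T1 :: bipoly where "T1 = [:[:0, 1:]:]"
definition T2 :: bipoly where "T2 = [:0, 1:]"

definition eval2 :: "bipoly \<Rightarrow> complex \<Rightarrow> complex \<Rightarrow> complex" where
  "eval2 P a b = poly (poly P [:b:]) a"

definition bcoeff :: "bipoly \<Rightarrow> nat \<Rightarrow> nat \<Rightarrow> complex" where
  "bcoeff P i j = coeff (coeff P j) i"

definition homogeneous :: "bipoly \<Rightarrow> nat \<Rightarrow> bool" where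
  "homogeneous P d \<longleftrightarrow> (\<forall>i j. bcoeff P i j \<noteq> 0 \<longrightarrow> i + j = d)"

definition hom_pair :: "bipoly \<times> bipoly \<Rightarrow> nat \<Rightarrow> bool" where
  "hom_pair F d \<longleftrightarrow> homogeneous (fst F) d \<and> homogeneous (snd F) d \<and> F \<noteq> (0, 0)"

definition hdeg :: "bipoly \<times> bipoly \<Rightarrow> nat" where
  "hdeg F = (THE d. hom_pair F d)"

definition pgcd :: "bipoly \<times> bipoly \<Rightarrow> bipoly" where
  "pgcd F = gcd (fst F) (snd F)"

definition pair_div :: "bipoly \<times> bipoly \<Rightarrow> bipoly \<Rightarrow> bipoly \<times> bipoly" where
  "pair_div F g = (fst F div g, snd F div g)"

definition Fmap :: "bipoly \<times> bipoly \<Rightarrow> bipoly \<times> bipoly" where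
  "Fmap F = (let z = fst F; w = snd F in
     ((T1 * w^2 - T2 * z^2)^2, 4 * T2 * z * w * (w - z) * (T1 * w - T2 * z)))"

definition dehom :: "bipoly \<Rightarrow> complex poly" where
  "dehom P = poly P 1"

text \<open>Resultant of a homogeneous pair of degree d: the Sylvester determinant of the
  two binary forms of degree d (coefficient of t1^i t2^(d-i) = i-th coefficient of P(t,1)).\<close>
definition hresultant :: "bipoly \<times> bipoly \<Rightarrow> complex" where
  "hresultant F = det (sylvester_mat_sub (hdeg F) (hdeg F) (dehom (fst F)) (dehom (snd F)))"

definition hom_lift :: "bipoly \<times> bipoly \<Rightarrow> complex poly fract \<Rightarrow> bool" where
  "hom_lift C c \<longleftrightarrow> (\<exists>k. homogeneous (fst C) k \<and> homogeneous (snd C) k) \<and>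
     coprime (fst C) (snd C) \<and> dehom (snd C) \<noteq> 0 \<and>
     c = Fract (dehom (fst C)) (dehom (snd C))"

fun Fiter :: "bipoly \<times> bipoly \<Rightarrow> nat \<Rightarrow> bipoly \<times> bipoly" where
  "Fiter C 0 = C"
| "Fiter C (Suc 0) = pair_div (Fmap C) (pgcd (Fmap C))"
| "Fiter C (Suc (Suc n)) = pair_div (Fmap (Fiter C (Suc n))) (T2^2)"

end

theory Submission
  imports Defs "Subresultants.Subresultant_Gcd"
begin

text \<open>Write \<open>z = c\<^sub>1(t,1)\<close>, \<open>w = c\<^sub>2(t,1)\<close>. The two components of \<open>F(C)(t,1)\<close> are
  \<open>P = (t w\<^sup>2 - z\<^sup>2)\<^sup>2\<close> and \<open>Q = 4 z w (w - z)(t w - z)\<close>, and \<open>P - Q = (t w\<^sup>2 - 2 z w + z\<^sup>2)\<^sup>2\<close>.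
  Comparing the orders of vanishing of \<open>P\<close>, \<open>Q\<close> and \<open>P - Q\<close> at \<open>t = 0\<close> and \<open>t = 1\<close> shows
  that removing the common factor \<open>g = gcd(P, Q)\<close> cannot make \<open>P/g\<close> vanish at \<open>0\<close> or
  \<open>P/g - Q/g\<close> vanish at \<open>1\<close>; \<open>deg Q < deg P\<close> gives \<open>Q\<^sub>1(1,0) = 0 \<noteq> P\<^sub>1(1,0)\<close>. If
  \<open>F\<^sub>1\<close> had degree 1, then \<open>Q/g = c\<close> would be constant and \<open>P (P/g - c) = (P - Q) P/g\<close>;
  the simple root of \<open>P/g\<close> would occur to even order on the left and odd order on the right.

  These normalisation properties propagate: if \<open>F\<^sub>n = (z, w)\<close> has them then \<open>t\<^sub>2 | w\<close>,
  so \<open>F(F\<^sub>n)\<close> is divisible by \<open>t\<^sub>2\<^sup>2\<close>, the quotient has the same properties, and a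
  short case analysis shows its components have no common zero on \<open>\<P>\<^sup>1\<close>. Hence
  degrees multiply by 4 and the resultants never vanish.\<close>


subsection \<open>Binary forms\<close>

definition bconst :: "complex \<Rightarrow> bipoly" where
  "bconst a = [:[:a:]:]"

text \<open>\<open>bscale a P\<close> is \<open>P(a t\<^sub>1, a t\<^sub>2)\<close>.\<close>
definition bscale :: "complex \<Rightarrow> bipoly \<Rightarrow> bipoly" where
  "bscale a P = pcompose (map_poly (\<lambda>q. pcompose q [:0, a:]) P) [:0, [:a:]:]"

lemma bipoly_eqI: "(\<And>i j. bcoeff P i j = bcoeff Q i j) \<Longrightarrow> P = Q"
  unfolding bcoeff_def by (simp add: poly_eq_iff)

lemma ex_bcoeff_nonzero: "P \<noteq> 0 \<Longrightarrow> \<exists>i j. bcoeff P i j \<noteq> 0"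
  using bipoly_eqI[of P 0] by (auto simp: bcoeff_def)

lemma bcoeff_diff [simp]: "bcoeff (P - Q) i j = bcoeff P i j - bcoeff Q i j"
  and bcoeff_0 [simp]: "bcoeff 0 i j = 0"
  and bcoeff_bconst_mult [simp]: "bcoeff (bconst a * P) i j = a * bcoeff P i j"
  unfolding bcoeff_def bconst_def by simp_all

lemma bcoeff_bscale [simp]: "bcoeff (bscale a P) i j = a ^ (i + j) * bcoeff P i j"
proof -
  have "[:a:] ^ j = [:a ^ j:]" for j
    by (induct j) (auto simp: mult.commute)
  then show ?thesis
    unfolding bscale_def bcoeff_def
    by (simp add: coeff_pcompose_linear coeff_map_poly power_add mult_ac)
qed

lemma bscale_mult: "bscale a (P * Q) = bscale a P * bscale a Q"
proof -
  interpret map_poly_comm_ring_hom "\<lambda>q. pcompose q [:0, a:]" ..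
  show ?thesis
    unfolding bscale_def by (simp add: hom_mult pcompose_mult)
qed

lemma bscale_bscale: "bscale a (bscale b P) = bscale (a * b) P"
  by (rule bipoly_eqI) (simp add: power_mult_distrib)

lemma bscale_1: "bscale 1 P = P"
  by (rule bipoly_eqI) simp

lemma bscale_dvd: "X dvd Y \<Longrightarrow> bscale a X dvd bscale a Y"
  by (auto simp: bscale_mult elim!: dvdE)

lemma is_unit_bconst: "a \<noteq> 0 \<Longrightarrow> is_unit (bconst a)"
  by (simp add: bconst_def is_unit_poly_iff)

lemma complex_power_two_inject: "(2::complex) ^ m = 2 ^ n \<Longrightarrow> m = n"
proof -
  assume "(2::complex) ^ m = 2 ^ n"
  then have "of_nat (2 ^ m) = (of_nat (2 ^ n) :: complex)"
    by simp
  then show "m = n"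
    by (simp only: of_nat_eq_iff) simp
qed

lemma homogeneous_0 [simp]: "homogeneous 0 n"
  by (simp add: homogeneous_def)

lemma homogeneous_bscale: "homogeneous P n \<Longrightarrow> bscale a P = bconst (a ^ n) * P"
  by (rule bipoly_eqI) (auto simp: homogeneous_def)

lemma homogeneous_if_bscale_2:
  assumes "bscale 2 P = bconst (2 ^ n) * P"
  shows "homogeneous P n"
  unfolding homogeneous_def
proof (intro allI impI)
  fix i j
  assume nz: "bcoeff P i j \<noteq> 0"
  have "bcoeff (bscale 2 P) i j = bcoeff (bconst (2 ^ n) * P) i j"
    using assms by simp
  then have "(2::complex) ^ (i + j) = 2 ^ n"
    using nz by simp
  then show "i + j = n"
    by (rule complex_power_two_inject)
qed

lemma ex_homogeneous_if_bscale_2: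
  assumes eq: "bscale 2 P = bconst a * P"
  shows "\<exists>n. homogeneous P n"
proof (cases "P = 0")
  case True
  then show ?thesis
    by simp
next
  case False
  then obtain i j where nz: "bcoeff P i j \<noteq> 0"
    using ex_bcoeff_nonzero by blast
  have "bcoeff (bscale 2 P) i j = bcoeff (bconst a * P) i j"
    using eq by simp
  then have "a = 2 ^ (i + j)"
    using nz by simp
  then show ?thesis
    using eq homogeneous_if_bscale_2 by blast
qed

lemma homogeneous_bconst: "homogeneous (bconst a) 0"
  unfolding homogeneous_def bcoeff_def bconst_def by (auto simp: coeff_pCons split: nat.splits)

lemma homogeneous_numeral: "homogeneous (numeral k) 0"
  using homogeneous_bconst[of "numeral k"] by (simp add: bconst_def numeral_poly)

lemma homogeneous_T1: "homogeneous T1 1"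
  and homogeneous_T2: "homogeneous T2 1"
  unfolding homogeneous_def bcoeff_def T1_def T2_def by (auto simp: coeff_pCons split: nat.splits)

lemma homogeneous_diff: "homogeneous P n \<Longrightarrow> homogeneous Q n \<Longrightarrow> homogeneous (P - Q) n"
  unfolding homogeneous_def by (metis diff_zero bcoeff_diff)

lemma homogeneous_mult:
  assumes "homogeneous P m" "homogeneous Q n" "k = m + n"
  shows "homogeneous (P * Q) k"
  using assms
  by (intro homogeneous_if_bscale_2)
    (simp add: bscale_mult homogeneous_bscale power_add bconst_def mult_ac)

lemma homogeneous_power: "homogeneous P n \<Longrightarrow> k = m * n \<Longrightarrow> homogeneous (P ^ m) k"
proof (induct m arbitrary: k)
  case 0
  then show ?case
    using homogeneous_bconst[of 1] by (simp add: bconst_def pCons_one)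
next
  case (Suc m)
  then show ?case
    using homogeneous_mult[of P n "P ^ m" "m * n"] by simp
qed

lemma homogeneous_bcoeff_eq_0: "homogeneous P n \<Longrightarrow> i + j \<noteq> n \<Longrightarrow> bcoeff P i j = 0"
  unfolding homogeneous_def by blast

lemma homogeneous_degree_unique:
  "homogeneous P m \<Longrightarrow> homogeneous P n \<Longrightarrow> P \<noteq> 0 \<Longrightarrow> m = n"
  unfolding homogeneous_def using ex_bcoeff_nonzero by metis

lemma homogeneous_cofactor:
  assumes h: "homogeneous (G * X) N" and hG: "homogeneous G m" and G: "G \<noteq> 0"
  shows "homogeneous X (N - m)"
  unfolding homogeneous_def
proof (intro allI impI)
  fix i j
  assume nz: "bcoeff X i j \<noteq> 0"
  have "G * (bconst (2 ^ m) * bscale 2 X) = G * (bconst (2 ^ N) * X)"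
    using homogeneous_bscale[OF h, of 2] homogeneous_bscale[OF hG, of 2]
    by (simp add: bscale_mult mult_ac)
  then have "bcoeff (bconst (2 ^ m) * bscale 2 X) i j = bcoeff (bconst (2 ^ N) * X) i j"
    using G by simp
  then have "(2::complex) ^ (m + (i + j)) = 2 ^ N"
    using nz by (simp add: power_add)
  then show "i + j = N - m"
    using complex_power_two_inject by force
qed

text \<open>\<open>bscale 2\<close> maps the gcd to an associate of itself, and the associating unit is a
  constant.\<close>
lemma homogeneous_gcd:
  assumes hP: "homogeneous P N" and hQ: "homogeneous Q N"
  shows "\<exists>m. homogeneous (gcd P Q) m"
proof (cases "gcd P Q = 0")
  case True
  then show ?thesis
    by simp
next
  case g0: False
  define g where "g = gcd P Q"
  have scaled_dvd: "bscale a g dvd g" if "a \<noteq> 0" for a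
  proof -
    have "bscale a g dvd bscale a P" "bscale a g dvd bscale a Q"
      unfolding g_def by (simp_all add: bscale_dvd)
    then have "bscale a g dvd P" "bscale a g dvd Q"
      using homogeneous_bscale[OF hP, of a] homogeneous_bscale[OF hQ, of a]
        is_unit_bconst[of "a ^ N"] that by (simp_all add: dvd_mult_unit_iff')
    then show ?thesis
      unfolding g_def by simp
  qed
  obtain v where v: "g = bscale 2 g * v"
    using scaled_dvd[of 2] by (auto elim: dvdE)
  have "bscale 2 (bscale (1/2) g) dvd bscale 2 g"
    using scaled_dvd[of "1/2"] by (simp add: bscale_dvd)
  then obtain u where u: "bscale 2 g = g * u"
    by (auto simp: bscale_bscale bscale_1 elim: dvdE)
  have "g * 1 = g * (u * v)"
    using u v by (simp add: mult.assoc[symmetric])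
  then have "is_unit u"
    using g0 unfolding g_def by (metis dvdI mult_cancel_left)
  then obtain a where "u = bconst a"
    unfolding is_unit_poly_iff bconst_def by auto
  then have "bscale 2 g = bconst a * g"
    using u by (simp add: mult.commute)
  then show ?thesis
    unfolding g_def by (rule ex_homogeneous_if_bscale_2)
qed

lemma homogeneous_div_gcd:
  assumes hP: "homogeneous P N" and hQ: "homogeneous Q N" and Q: "Q \<noteq> 0"
  obtains d where "homogeneous (P div gcd P Q) d" "homogeneous (Q div gcd P Q) d"
    and "coprime (P div gcd P Q) (Q div gcd P Q)"
proof -
  obtain m where hg: "homogeneous (gcd P Q) m"
    using homogeneous_gcd[OF hP hQ] by blast
  have g: "gcd P Q \<noteq> 0"
    using Q by simp
  have "homogeneous (P div gcd P Q) (N - m)" "homogeneous (Q div gcd P Q) (N - m)"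
    using homogeneous_cofactor[OF _ hg g] hP hQ by simp_all
  moreover have "coprime (P div gcd P Q) (Q div gcd P Q)"
    using Q by (intro div_gcd_coprime) simp
  ultimately show ?thesis
    using that by blast
qed

lemma hdeg_eqI:
  assumes "hom_pair F e"
  shows "hdeg F = e"
  unfolding hdeg_def
proof (rule the_equality)
  fix e'
  assume "hom_pair F e'"
  then show "e' = e"
    using assms homogeneous_degree_unique unfolding hom_pair_def
    by (metis prod.collapse)
qed (fact assms)


subsection \<open>Dehomogenisation\<close>

lemma dehom_mult [simp]: "dehom (P * Q) = dehom P * dehom Q"
  and dehom_diff [simp]: "dehom (P - Q) = dehom P - dehom Q"
  and dehom_power [simp]: "dehom (P ^ k) = dehom P ^ k"
  and dehom_numeral [simp]: "dehom (numeral m) = numeral m"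
  and dehom_0 [simp]: "dehom 0 = 0"
  and dehom_1 [simp]: "dehom 1 = 1"
  and dehom_T1 [simp]: "dehom T1 = [:0, 1:]"
  and dehom_T2 [simp]: "dehom T2 = 1"
  and dehom_bconst [simp]: "dehom (bconst a) = [:a:]"
  unfolding dehom_def T1_def T2_def bconst_def by simp_all

lemma coeff_dehom_homogeneous:
  assumes h: "homogeneous P n"
  shows "coeff (dehom P) i = (if i \<le> n then bcoeff P i (n - i) else 0)"
proof -
  have "coeff (dehom P) i = (\<Sum>j\<le>degree P. bcoeff P i j)"
    unfolding dehom_def bcoeff_def poly_altdef by (simp add: coeff_sum)
  also have "\<dots> = (\<Sum>j\<le>degree P. if j = n - i then (if i \<le> n then bcoeff P i (n - i) else 0) else 0)"
    using h by (intro sum.cong) (auto intro!: homogeneous_bcoeff_eq_0)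
  also have "\<dots> = (if i \<le> n then bcoeff P i (n - i) else 0)"
    by (auto simp: bcoeff_def coeff_eq_0)
  finally show ?thesis .
qed

lemma degree_dehom_le: "homogeneous P n \<Longrightarrow> degree (dehom P) \<le> n"
  by (rule degree_le) (simp add: coeff_dehom_homogeneous)

lemma homogeneous_eq_if_dehom_eq:
  assumes hP: "homogeneous P n" and hQ: "homogeneous Q n" and eq: "dehom P = dehom Q"
  shows "P = Q"
proof (rule bipoly_eqI)
  fix i j
  show "bcoeff P i j = bcoeff Q i j"
  proof (cases "i + j = n")
    case True
    then show ?thesis
      using eq coeff_dehom_homogeneous[OF hP, of i] coeff_dehom_homogeneous[OF hQ, of i]
      by (metis add_diff_cancel_left' le_add1)
  next
    case False
    then show ?thesis
      using hP hQ unfolding homogeneous_def by metis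
  qed
qed

lemma dehom_eq_0_iff: "homogeneous P n \<Longrightarrow> dehom P = 0 \<longleftrightarrow> P = 0"
  using homogeneous_eq_if_dehom_eq[of P n 0] by auto

definition homogenize :: "nat \<Rightarrow> complex poly \<Rightarrow> bipoly" where
  "homogenize n p = (\<Sum>i\<le>n. monom (monom (coeff p i) i) (n - i))"

lemma bcoeff_homogenize:
  "bcoeff (homogenize n p) i j = (if i \<le> n \<and> j = n - i then coeff p i else 0)"
proof -
  have "bcoeff (homogenize n p) i j = (\<Sum>k\<le>n. if k = i then (if n - i = j then coeff p i else 0) else 0)"
    unfolding homogenize_def bcoeff_def coeff_sum by (intro sum.cong) (auto simp: coeff_monom)
  also have "\<dots> = (if i \<le> n \<and> j = n - i then coeff p i else 0)"
    by auto
  finally show ?thesis .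
qed

lemma homogeneous_homogenize: "homogeneous (homogenize n p) n"
  unfolding homogeneous_def bcoeff_homogenize by (auto split: if_splits)

lemma dehom_homogenize: "degree p \<le> n \<Longrightarrow> dehom (homogenize n p) = p"
  by (rule poly_eqI)
    (auto simp: coeff_dehom_homogeneous[OF homogeneous_homogenize] bcoeff_homogenize coeff_eq_0)

lemma eval2_mult [simp]: "eval2 (P * Q) a b = eval2 P a b * eval2 Q a b"
  and eval2_diff [simp]: "eval2 (P - Q) a b = eval2 P a b - eval2 Q a b"
  and eval2_power [simp]: "eval2 (P ^ k) a b = eval2 P a b ^ k"
  and eval2_numeral [simp]: "eval2 (numeral m) a b = numeral m"
  and eval2_T1 [simp]: "eval2 T1 a b = a"
  and eval2_T2 [simp]: "eval2 T2 a b = b"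
  unfolding eval2_def T1_def T2_def by simp_all

lemma eval2_dehom: "eval2 P a 1 = poly (dehom P) a"
  unfolding eval2_def dehom_def by (simp add: pCons_one)

lemma eval2_1_0:
  assumes h: "homogeneous P n"
  shows "eval2 P 1 0 = coeff (dehom P) n"
proof -
  have "eval2 P 1 0 = (\<Sum>i\<le>degree (coeff P 0). bcoeff P i 0)"
    unfolding eval2_def bcoeff_def by (simp add: poly_altdef[of _ 1] poly_0_coeff_0)
  also have "\<dots> = (\<Sum>i\<le>degree (coeff P 0). if i = n then bcoeff P n 0 else 0)"
    using h by (intro sum.cong) (auto intro!: homogeneous_bcoeff_eq_0)
  also have "\<dots> = bcoeff P n 0"
    by (auto simp: bcoeff_def coeff_eq_0)
  finally show ?thesis
    using coeff_dehom_homogeneous[OF h, of n] by simp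
qed

lemma linear_form_dvd:
  assumes h: "homogeneous H n" and root: "poly (dehom H) a = 0"
  shows "(T1 - bconst a * T2) dvd H"
proof (cases "H = 0")
  case False
  then have "dehom H \<noteq> 0"
    using dehom_eq_0_iff[OF h] by simp
  moreover obtain q where q: "dehom H = [:-a, 1:] * q"
    using root unfolding poly_eq_0_iff_dvd by (auto elim: dvdE)
  ultimately have "degree (dehom H) = 1 + degree q"
    unfolding q by (subst degree_mult_eq) auto
  then have dq: "degree q \<le> n - 1" and n: "n \<ge> 1"
    using degree_dehom_le[OF h] by auto
  have "homogeneous (T1 - bconst a * T2) 1"
    by (intro homogeneous_diff homogeneous_T1 homogeneous_mult[OF homogeneous_bconst homogeneous_T2]) simp
  then have "homogeneous ((T1 - bconst a * T2) * homogenize (n - 1) q) n"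
    using n by (intro homogeneous_mult[OF _ homogeneous_homogenize]) auto
  moreover have "dehom ((T1 - bconst a * T2) * homogenize (n - 1) q) = dehom H"
    using q dehom_homogenize[OF dq] by simp
  ultimately have "H = (T1 - bconst a * T2) * homogenize (n - 1) q"
    using homogeneous_eq_if_dehom_eq[OF h] by metis
  then show ?thesis
    by simp
qed simp

lemma T2_factor:
  assumes h: "homogeneous H n" and top: "coeff (dehom H) n = 0"
  obtains G where "homogeneous G (n - 1)" "H = T2 * G"
proof (cases "H = 0")
  case True
  then show ?thesis
    using that[of 0] by simp
next
  case False
  then have nz: "dehom H \<noteq> 0"
    using dehom_eq_0_iff[OF h] by simp
  then have n: "degree (dehom H) < n"
    using degree_dehom_le[OF h] top le_degree[of "dehom H" "degree (dehom H)"]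
    by (metis le_neq_implies_less leading_coeff_0_iff)
  have "homogeneous (T2 * homogenize (n - 1) (dehom H)) n"
    using n by (intro homogeneous_mult[OF homogeneous_T2 homogeneous_homogenize]) simp
  moreover have "dehom (T2 * homogenize (n - 1) (dehom H)) = dehom H"
    using n by (simp add: dehom_homogenize)
  ultimately show ?thesis
    using homogeneous_eq_if_dehom_eq[OF h] that homogeneous_homogenize by metis
qed

lemma coprime_forms_no_common_root:
  assumes "homogeneous P n" "homogeneous Q n" "coprime P Q"
  shows "\<not> (poly (dehom P) a = 0 \<and> poly (dehom Q) a = 0)"
proof
  assume "poly (dehom P) a = 0 \<and> poly (dehom Q) a = 0"
  then have "is_unit (T1 - bconst a * T2)"
    using assms coprime_common_divisor linear_form_dvd by metis
  then have "is_unit (dehom (T1 - bconst a * T2))"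
    by (metis dehom_1 dehom_mult dvdE dvdI)
  then show False
    by (simp add: is_unit_poly_iff)
qed

lemma coprime_forms_top_coeff:
  assumes "homogeneous P n" "homogeneous Q n" "coprime P Q"
  shows "\<not> (coeff (dehom P) n = 0 \<and> coeff (dehom Q) n = 0)"
proof
  assume "coeff (dehom P) n = 0 \<and> coeff (dehom Q) n = 0"
  then have "is_unit T2"
    using assms by (metis T2_factor coprime_common_divisor dvd_triv_left)
  then show False
    by (simp add: T2_def is_unit_poly_iff)
qed

lemma coprime_forms_degree:
  assumes hP: "homogeneous P n" and hQ: "homogeneous Q n" and "coprime P Q"
    and less: "degree (dehom Q) < degree (dehom P)"
  shows "degree (dehom P) = n" and "coeff (dehom Q) n = 0"
proof -
  show Q: "coeff (dehom Q) n = 0"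
    using less degree_dehom_le[OF hP] by (intro coeff_eq_0) simp
  then have "coeff (dehom P) n \<noteq> 0"
    using coprime_forms_top_coeff[OF assms(1-3)] by simp
  then show "degree (dehom P) = n"
    using le_degree degree_dehom_le[OF hP] by (meson le_antisym)
qed


subsection \<open>The dehomogenised map\<close>

lemma F_identity:
  fixes x z w :: "'a::comm_ring_1"
  shows "(x * w^2 - z^2)^2 - 4 * z * w * (w - z) * (x * w - z) = (x * w^2 - 2 * z * w + z^2)^2"
  by (simp add: eval_nat_numeral algebra_simps)

text \<open>The degrees of \<open>t w\<^sup>2\<close> and \<open>z\<^sup>2\<close> have different parity, so they never cancel.\<close>
lemma degree_t_sq_minus_sq:
  fixes z w :: "complex poly"
  assumes "w \<noteq> 0"
  shows "degree ([:0, 1:] * w^2 - z^2) = max (2 * degree w + 1) (2 * degree z)"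
proof -
  have dtw: "degree ([:0, 1:] * w^2) = 2 * degree w + 1"
    using assms by (simp add: degree_mult_eq degree_power_eq)
  have dz: "degree (z^2) = 2 * degree z"
    by (cases "z = 0") (simp_all add: degree_power_eq)
  show ?thesis
  proof (cases "degree z \<le> degree w")
    case True
    then show ?thesis
      using degree_add_eq_left[of "- (z^2)" "[:0, 1:] * w^2"] dtw dz by simp
  next
    case False
    then show ?thesis
      using degree_add_eq_right[of "[:0, 1:] * w^2" "- (z^2)"] dtw dz by simp
  qed
qed

lemma t_sq_minus_sq_nonzero: "(w::complex poly) \<noteq> 0 \<Longrightarrow> [:0, 1:] * w^2 - z^2 \<noteq> 0"
  using degree_t_sq_minus_sq[of w z] by fastforce

lemma degree_F_snd_less:
  fixes z w :: "complex poly"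
  assumes w: "w \<noteq> 0"
  shows "degree (4 * z * w * (w - z) * ([:0, 1:] * w - z)) < degree (([:0, 1:] * w^2 - z^2)^2)"
proof -
  have "degree (4 :: complex poly) = 0"
    by simp
  then have "degree (4 * z * w * (w - z) * ([:0, 1:] * w - z))
      \<le> degree z + degree w + degree (w - z) + degree ([:0, 1:] * w - z)"
    using degree_mult_le[of "4 * z * w * (w - z)" "[:0, 1:] * w - z"] degree_mult_le[of "4 * z * w" "w - z"]
      degree_mult_le[of "4 * z" w] degree_mult_le[of 4 z]
    by linarith
  moreover have "degree (w - z) \<le> max (degree w) (degree z)"
    by (rule degree_diff_le_max)
  moreover have "degree ([:0, 1:] * w - z) \<le> max (degree w + 1) (degree z)"
    using degree_diff_le_max[of "[:0, 1:] * w" z] w by (simp add: degree_mult_eq)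
  moreover have "degree (([:0, 1:] * w^2 - z^2)^2) = 2 * max (2 * degree w + 1) (2 * degree z)"
    using degree_t_sq_minus_sq[OF w] t_sq_minus_sq_nonzero[OF w] by (simp add: degree_power_eq)
  ultimately show ?thesis
    by (cases "degree z \<le> degree w") (simp_all add: max_def)
qed

lemma order_sq: "p \<noteq> 0 \<Longrightarrow> order a ((p::complex poly)^2) = 2 * order a p"
  by (simp add: power2_eq_square order_mult)

lemma order_0_F_fst_le_snd:
  fixes z w :: "complex poly"
  assumes nc: "\<not> (poly z 0 = 0 \<and> poly w 0 = 0)" and Q: "4 * z * w * (w - z) * ([:0, 1:] * w - z) \<noteq> 0"
  shows "order 0 (([:0, 1:] * w^2 - z^2)^2) \<le> order 0 (4 * z * w * (w - z) * ([:0, 1:] * w - z))"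
proof (cases "poly z 0 = 0")
  case False
  then have "order 0 (([:0, 1:] * w^2 - z^2)^2) = 0"
    by (intro order_0I) simp
  then show ?thesis
    by simp
next
  case True
  then have w0: "poly w 0 \<noteq> 0"
    using nc by auto
  from True obtain z1 where z1: "z = [:0, 1:] * z1"
    using poly_eq_0_iff_dvd[of z 0] by (auto elim: dvdE)
  define B where "B = w^2 - [:0, 1:] * z1^2"
  define R where "R = 4 * z1 * w * (w - z) * (w - z1)"
  have P: "([:0, 1:] * w^2 - z^2)^2 = [:0, 1:]^2 * B^2"
    unfolding B_def z1 by (simp add: algebra_simps power2_eq_square)
  have Qe: "4 * z * w * (w - z) * ([:0, 1:] * w - z) = [:0, 1:]^2 * R"
    unfolding R_def z1 by (simp add: algebra_simps power2_eq_square)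
  have B0: "poly B 0 \<noteq> 0"
    unfolding B_def using w0 by simp
  then have B: "[:0, 1:]^2 * B^2 \<noteq> 0"
    by auto
  have R: "[:0, 1:]^2 * R \<noteq> 0"
    using Q unfolding Qe .
  have x2: "order 0 ([:0, 1:]^2 :: complex poly) = 2"
    using order_power_n_n[of "0::complex" 2] by simp
  have "order 0 (([:0, 1:] * w^2 - z^2)^2) = 2"
    unfolding P using order_mult[OF B] x2 order_0I[of "B^2"] B0 by simp
  moreover have "order 0 (4 * z * w * (w - z) * ([:0, 1:] * w - z)) = 2 + order 0 R"
    unfolding Qe using order_mult[OF R] x2 by simp
  ultimately show ?thesis
    by simp
qed

lemma order_1_F_diff_le_snd:
  fixes z w :: "complex poly"
  assumes nc: "\<not> (poly z 1 = 0 \<and> poly w 1 = 0)" and Q: "4 * z * w * (w - z) * ([:0, 1:] * w - z) \<noteq> 0"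
  defines "D \<equiv> [:0, 1:] * w^2 - 2 * z * w + z^2"
  shows "D \<noteq> 0" and "order 1 (D^2) \<le> order 1 (4 * z * w * (w - z) * ([:0, 1:] * w - z))"
proof -
  have "D \<noteq> 0 \<and> order 1 (D^2) \<le> order 1 (4 * z * w * (w - z) * ([:0, 1:] * w - z))"
  proof (cases "poly (w - z) 1 = 0")
    case False
    have "poly D 1 = (poly w 1 - poly z 1)^2"
      unfolding D_def by (simp add: power2_eq_square algebra_simps)
    then have "poly D 1 \<noteq> 0" and "order 1 (D^2) = 0"
      using False by (auto intro: order_0I)
    then show ?thesis
      by auto
  next
    case True
    then have w1: "poly w 1 \<noteq> 0"
      using nc by auto
    define y :: "complex poly" where "y = [:-1, 1:]"
    have x: "[:0, 1:] = y + 1"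
      unfolding y_def by (rule poly_eqI) (simp add: coeff_pCons split: nat.splits)
    from True obtain e where e: "w - z = y * e"
      using poly_eq_0_iff_dvd[of "w - z" 1] unfolding y_def by (auto elim: dvdE)
    then have z: "z = w - y * e"
      by (simp add: algebra_simps)
    define E where "E = w^2 + y * e^2"
    define R where "R = 4 * z * w * e * (w + e)"
    have De: "D = y * E"
      unfolding D_def E_def x z by (simp add: algebra_simps power2_eq_square)
    have Qe: "4 * z * w * (w - z) * ([:0, 1:] * w - z) = y^2 * R"
      unfolding R_def x e by (simp add: z algebra_simps power2_eq_square)
    have E1: "poly E 1 \<noteq> 0"
      unfolding E_def y_def using w1 by simp
    have y1: "order 1 y = 1" and y2: "order 1 (y^2) = 2"
      using order_power_n_n[of "1::complex" 1] order_power_n_n[of "1::complex" 2]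
      unfolding y_def by simp_all
    have "y \<noteq> 0" "E \<noteq> 0"
      using E1 unfolding y_def by auto
    then have yE: "y * E \<noteq> 0"
      by simp
    have yR: "y^2 * R \<noteq> 0"
      using Q unfolding Qe .
    have "order 1 D = 1"
      unfolding De using order_mult[OF yE] y1 order_0I[OF E1] by simp
    then have "order 1 (D^2) = 2"
      using order_sq yE De by simp
    moreover have "order 1 (4 * z * w * (w - z) * ([:0, 1:] * w - z)) = 2 + order 1 R"
      unfolding Qe using order_mult[OF yR] y2 by simp
    ultimately show ?thesis
      using yE De by simp
  qed
  then show "D \<noteq> 0" and "order 1 (D^2) \<le> order 1 (4 * z * w * (w - z) * ([:0, 1:] * w - z))"
    by simp_all
qed

lemma cofactor_root_if_order_le:
  fixes g p q :: "complex poly"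
  assumes P: "g * p \<noteq> 0" and Q: "g * q \<noteq> 0" and le: "order a (g * p) \<le> order a (g * q)"
    and root: "poly p a = 0"
  shows "poly q a = 0"
proof (rule ccontr)
  assume "poly q a \<noteq> 0"
  then have "order a (g * q) = order a g"
    using order_mult[OF Q] order_0I by simp
  moreover have "order a p \<noteq> 0"
    using root P order_root by auto
  then have "order a (g * p) > order a g"
    using order_mult[OF P] by simp
  ultimately show False
    using le by simp
qed

lemma square_mult_neq_square_mult:
  fixes A D L M :: "complex poly"
  assumes A: "A \<noteq> 0" and M: "poly M r \<noteq> 0" and L: "odd (order r L)"
  shows "A^2 * M \<noteq> D^2 * L"
proof
  assume eq: "A^2 * M = D^2 * L"
  have lhs: "A^2 * M \<noteq> 0"
    using A M by auto
  then have rhs: "D^2 * L \<noteq> 0"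
    using eq by simp
  have "order r (A^2 * M) = 2 * order r A"
    using order_mult[OF lhs] order_sq[OF A] order_0I[OF M] by simp
  moreover have "order r (D^2 * L) = 2 * order r D + order r L"
    using order_mult[OF rhs] order_sq[of D] rhs by auto
  ultimately show False
    using eq L by (metis even_add even_mult_iff even_numeral)
qed

lemma square_cofactor_degree_ge_2:
  fixes A D g p q :: "complex poly"
  assumes A: "A \<noteq> 0" and P: "g * p = A^2" and D: "g * (p - q) = D^2"
    and q: "q \<noteq> 0" and less: "degree q < degree p"
  shows "2 \<le> degree p"
proof (rule ccontr)
  assume "\<not> 2 \<le> degree p"
  then have p1: "degree p = 1" and "degree q = 0"
    using less by auto
  then obtain c where qc: "q = [:c:]"
    using degree_eq_zeroE by blast
  then have c: "c \<noteq> 0"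
    using q by auto
  have p: "p \<noteq> 0"
    using p1 by auto
  obtain r where r: "poly p r = 0"
    using fundamental_theorem_of_algebra[of p] p1 by (auto simp: constant_degree)
  then have "order r p \<noteq> 0"
    using p order_root by blast
  moreover have "order r p \<le> 1"
    using order_degree[OF p] p1 by simp
  ultimately have "odd (order r p)"
    by (metis le_antisym less_one not_le odd_one)
  moreover have "poly (p - [:c:]) r \<noteq> 0"
    using r c by simp
  ultimately have "A^2 * (p - [:c:]) \<noteq> D^2 * p"
    using square_mult_neq_square_mult A by blast
  moreover have "A^2 * (p - [:c:]) = D^2 * p"
    unfolding D[symmetric] P[symmetric] qc by (simp only: mult_ac)
  ultimately show False
    by blast
qed

text \<open>The core of the argument for \<open>F\<^sub>1\<close>, read off on \<open>t\<^sub>2 = 1\<close>: \<open>g\<close> is the dehomogenised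
  gcd and \<open>p\<close>, \<open>q\<close> are the two components of \<open>F\<^sub>1(t,1)\<close>.\<close>
lemma F_reduced:
  fixes z w g p q :: "complex poly"
  assumes z: "z \<noteq> 0" and w: "w \<noteq> 0" and wz: "w \<noteq> z" and tw: "[:0, 1:] * w \<noteq> z"
    and ncz: "\<And>a. \<not> (poly z a = 0 \<and> poly w a = 0)"
    and P: "g * p = ([:0, 1:] * w^2 - z^2)^2"
    and Q: "g * q = 4 * z * w * (w - z) * ([:0, 1:] * w - z)"
    and ncpq: "\<And>a. \<not> (poly p a = 0 \<and> poly q a = 0)"
  shows "degree q < degree p" and "poly p 0 \<noteq> 0" and "poly p 1 \<noteq> poly q 1" and "2 \<le> degree p"
proof -
  define D where "D = [:0, 1:] * w^2 - 2 * z * w + z^2"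
  have Qnz: "g * q \<noteq> 0"
    unfolding Q using z w wz tw by simp
  have Pnz: "g * p \<noteq> 0"
    unfolding P using t_sq_minus_sq_nonzero[OF w] by simp
  have D: "D^2 = g * (p - q)"
    unfolding D_def right_diff_distrib[of g p q] P Q by (rule F_identity[symmetric])
  have "degree (g * q) < degree (g * p)"
    unfolding P Q by (rule degree_F_snd_less[OF w])
  then show less: "degree q < degree p"
    using Pnz Qnz by (simp add: degree_mult_eq)
  show "poly p 0 \<noteq> 0"
  proof
    assume p0: "poly p 0 = 0"
    have "order 0 (g * p) \<le> order 0 (g * q)"
      unfolding P Q using ncz Qnz[unfolded Q] by (rule order_0_F_fst_le_snd)
    then have "poly q 0 = 0"
      using cofactor_root_if_order_le[OF Pnz Qnz _ p0] by blast
    then show False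
      using ncpq p0 by blast
  qed
  note order_1 = order_1_F_diff_le_snd[OF ncz Qnz[unfolded Q], folded D_def Q]
  have "poly (p - q) 1 \<noteq> 0"
  proof
    assume pq1: "poly (p - q) 1 = 0"
    have "g * (p - q) \<noteq> 0"
      using order_1(1) unfolding D[symmetric] by simp
    then have "poly q 1 = 0"
      using cofactor_root_if_order_le[OF _ Qnz _ pq1] order_1(2) unfolding D by blast
    then show False
      using ncpq[of 1] pq1 by simp
  qed
  then show "poly p 1 \<noteq> poly q 1"
    by simp
  show "2 \<le> degree p"
    using square_cofactor_degree_ge_2[OF t_sq_minus_sq_nonzero[OF w] P D[symmetric]] Qnz less
    by simp
qed

lemma F_scalar_no_common_zero:
  fixes a Z W :: complex
  assumes ZW: "\<not> (Z = 0 \<and> W = 0)" and a0: "a = 0 \<Longrightarrow> Z \<noteq> 0" and a1: "a = 1 \<Longrightarrow> Z \<noteq> W"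
  shows "\<not> ((a * W^2 - Z^2)^2 = 0 \<and> 4 * Z * W * (W - Z) * (a * W - Z) = 0)"
proof
  assume h: "(a * W^2 - Z^2)^2 = 0 \<and> 4 * Z * W * (W - Z) * (a * W - Z) = 0"
  then have sq: "a * W^2 = Z^2"
    by simp
  have "W \<noteq> 0"
    using sq ZW by auto
  then have "Z \<noteq> 0"
    using sq a0 by auto
  then consider "W = Z" | "a * W = Z"
    using h \<open>W \<noteq> 0\<close> by auto
  then show False
  proof cases
    case 1
    then have "a = 1"
      using sq \<open>W \<noteq> 0\<close> by (simp add: power2_eq_square)
    then show False
      using a1 1 by simp
  next
    case 2
    then have "a * W^2 = a^2 * W^2"
      using sq power_mult_distrib by metis
    then have "a = 0 \<or> a = 1"
      using \<open>W \<noteq> 0\<close> by (simp add: power2_eq_square)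
    then show False
      using 2 a0 a1 \<open>Z \<noteq> 0\<close> by auto
  qed
qed


subsection \<open>Resultants of forms\<close>

text \<open>\<open>hresultant\<close> uses the formal degree of the forms: when \<open>q = Q(t,1)\<close> has smaller
  degree, each vanishing leading coefficient of \<open>Q\<close> contributes a factor \<open>coeff p m\<close>.\<close>
lemma det_sylvester_mat_sub_Suc:
  fixes p q :: "complex poly"
  assumes dq: "degree q \<le> n"
  shows "det (sylvester_mat_sub m (Suc n) p q) = coeff p m * det (sylvester_mat_sub m n p q)"
proof -
  define A where "A = sylvester_mat_sub m (Suc n) p q"
  have A: "A \<in> carrier_mat (m + Suc n) (m + Suc n)"
    unfolding A_def by (rule sylvester_mat_sub_carrier)
  have col0: "A $$ (i, 0) = (if i = 0 then coeff p m else 0)" if "i < m + Suc n" for i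
    unfolding A_def using that dq by (subst sylvester_mat_sub_index) (auto simp: coeff_eq_0)
  have minor: "mat_delete A 0 0 = sylvester_mat_sub m n p q"
  proof (rule eq_matI)
    fix i j
    assume "i < dim_row (sylvester_mat_sub m n p q)" "j < dim_col (sylvester_mat_sub m n p q)"
    then show "mat_delete A 0 0 $$ (i, j) = sylvester_mat_sub m n p q $$ (i, j)"
      unfolding mat_delete_def A_def using dq
      by (auto simp: sylvester_mat_sub_index intro!: coeff_eq_0)
  qed (use A in auto)
  have "det A = (\<Sum>i<m + Suc n. A $$ (i, 0) * cofactor A i 0)"
    by (rule laplace_expansion_column[OF A]) simp
  also have "\<dots> = (\<Sum>i<m + Suc n. if i = 0 then coeff p m * cofactor A 0 0 else 0)"
    by (intro sum.cong) (simp_all add: col0)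
  also have "\<dots> = coeff p m * cofactor A 0 0"
    by simp
  finally show ?thesis
    unfolding A_def cofactor_def minor[unfolded A_def] by simp
qed

lemma det_sylvester_mat_sub_add:
  fixes p q :: "complex poly"
  assumes "degree q \<le> n"
  shows "det (sylvester_mat_sub m (n + k) p q) = coeff p m ^ k * det (sylvester_mat_sub m n p q)"
  using assms by (induct k) (simp_all add: det_sylvester_mat_sub_Suc)

lemma det_sylvester_mat_sub_nonzero:
  fixes p q :: "complex poly"
  assumes dp: "degree p = d" and p: "p \<noteq> 0" and dq: "degree q \<le> d"
    and nc: "\<And>a. \<not> (poly p a = 0 \<and> poly q a = 0)"
  shows "det (sylvester_mat_sub d d p q) \<noteq> 0"
proof -
  have "det (sylvester_mat_sub d d p q) = lead_coeff p ^ (d - degree q) * resultant p q"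
    using det_sylvester_mat_sub_add[where q = q and n = "degree q" and m = d and p = p and k = "d - degree q"] dq dp
    by (simp add: resultant_def sylvester_mat_def)
  moreover have "degree (gcd p q) = 0"
  proof (rule ccontr)
    assume "degree (gcd p q) \<noteq> 0"
    then obtain a where "poly (gcd p q) a = 0"
      using fundamental_theorem_of_algebra by (auto simp: constant_degree)
    then show False
      using nc by (auto simp: poly_eq_0_iff_dvd intro: dvd_trans)
  qed
  then have "resultant p q \<noteq> 0"
    using resultant_0_gcd by blast
  ultimately show ?thesis
    using p by simp
qed


subsection \<open>The iteration\<close>

text \<open>The normalisation properties of \<open>F\<^sub>1\<close> that are preserved by \<open>F\<^sub>n \<mapsto> F\<^sub>n\<^sub>+\<^sub>1\<close>; the
  last clause says the two forms have no common zero in \<open>\<P>\<^sup>1\<close> (the point \<open>(1,0)\<close> is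
  covered by the fourth clause).\<close>
definition admissible_pair :: "bipoly \<times> bipoly \<Rightarrow> nat \<Rightarrow> bool" where
  "admissible_pair F e \<longleftrightarrow> homogeneous (fst F) e \<and> homogeneous (snd F) e \<and> e \<ge> 1 \<and>
     eval2 (fst F) 1 0 \<noteq> 0 \<and> eval2 (snd F) 1 0 = 0 \<and> eval2 (fst F) 0 1 \<noteq> 0 \<and>
     eval2 (fst F) 1 1 \<noteq> eval2 (snd F) 1 1 \<and>
     (\<forall>a. \<not> (eval2 (fst F) a 1 = 0 \<and> eval2 (snd F) a 1 = 0))"

lemma homogeneous_Fmap:
  assumes hz: "homogeneous z e" and hw: "homogeneous w e"
  shows "homogeneous (fst (Fmap (z, w))) (4 * e + 2)" and "homogeneous (snd (Fmap (z, w))) (4 * e + 2)"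
proof -
  have tw2: "homogeneous (T1 * w^2) (2 * e + 1)" and tz2: "homogeneous (T2 * z^2) (2 * e + 1)"
    by (intro homogeneous_mult[OF homogeneous_T1 homogeneous_power[OF hw]]
        homogeneous_mult[OF homogeneous_T2 homogeneous_power[OF hz]]; simp)+
  show "homogeneous (fst (Fmap (z, w))) (4 * e + 2)"
    unfolding Fmap_def Let_def prod.sel
    by (rule homogeneous_power[OF homogeneous_diff[OF tw2 tz2]]) simp
  have zw: "homogeneous (4 * T2 * z * w) (2 * e + 1)"
    by (intro homogeneous_mult[OF homogeneous_mult[OF homogeneous_mult[OF homogeneous_numeral
          homogeneous_T2] hz] hw]) simp_all
  have tw_tz: "homogeneous (T1 * w - T2 * z) (e + 1)"
    by (intro homogeneous_diff homogeneous_mult[OF homogeneous_T1 hw] homogeneous_mult[OF homogeneous_T2 hz]) simp_all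
  show "homogeneous (snd (Fmap (z, w))) (4 * e + 2)"
    unfolding Fmap_def Let_def prod.sel
    by (rule homogeneous_mult[OF homogeneous_mult[OF zw homogeneous_diff[OF hw hz]] tw_tz]) simp_all
qed

lemma Fmap_T2_mult:
  "Fmap (z, T2 * w) =
    (T2^2 * (T1 * T2 * w^2 - z^2)^2, T2^2 * (4 * T2 * z * w * (T2 * w - z) * (T1 * w - z)))"
  unfolding Fmap_def Let_def by (simp add: algebra_simps power2_eq_square)

lemma admissible_pair_Fmap:
  assumes adm: "admissible_pair F e"
  shows "T2^2 dvd fst (Fmap F)" and "T2^2 dvd snd (Fmap F)"
    and "admissible_pair (pair_div (Fmap F) (T2^2)) (4 * e)"
proof -
  obtain z w where F: "F = (z, w)"
    by (cases F)
  have hz: "homogeneous z e" and hw: "homogeneous w e" and e: "e \<ge> 1"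
    and z10: "eval2 z 1 0 \<noteq> 0" and w10: "eval2 w 1 0 = 0" and z01: "eval2 z 0 1 \<noteq> 0"
    and z11: "eval2 z 1 1 \<noteq> eval2 w 1 1" and nc: "\<And>a. \<not> (eval2 z a 1 = 0 \<and> eval2 w a 1 = 0)"
    using adm unfolding admissible_pair_def F by auto
  obtain w' where w: "w = T2 * w'"
    using T2_factor[OF hw] w10 eval2_1_0[OF hw] by metis
  define A where "A = T1 * T2 * w'^2 - z^2"
  define Q where "Q = 4 * T2 * z * w' * (T2 * w' - z) * (T1 * w' - z)"
  have fm: "Fmap F = (T2^2 * A^2, T2^2 * Q)"
    unfolding F w A_def Q_def by (rule Fmap_T2_mult)
  then show "T2^2 dvd fst (Fmap F)" "T2^2 dvd snd (Fmap F)"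
    by simp_all
  have T2sq: "T2^2 \<noteq> 0" "homogeneous (T2^2) 2"
    by (simp add: T2_def) (simp add: homogeneous_power[OF homogeneous_T2])
  have pd: "pair_div (Fmap F) (T2^2) = (A^2, Q)"
    unfolding fm pair_div_def using T2sq by simp
  have "homogeneous (A^2) (4 * e)" "homogeneous Q (4 * e)"
    using homogeneous_Fmap[OF hz hw] homogeneous_cofactor[OF _ T2sq(2,1)]
    unfolding F[symmetric] fm by force+
  moreover have w1: "eval2 w a 1 = eval2 w' a 1" for a
    unfolding w by simp
  moreover have "eval2 (A^2) 1 1 \<noteq> eval2 Q 1 1"
  proof -
    define W Z where "W = eval2 w' 1 1" and "Z = eval2 z 1 1"
    have "eval2 (A^2) 1 1 - eval2 Q 1 1 = (W^2 - Z^2)^2 - 4 * Z * W * (W - Z) * (W - Z)"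
      unfolding A_def Q_def W_def Z_def by simp
    also have "\<dots> = (W - Z)^4"
      by (simp add: eval_nat_numeral algebra_simps)
    finally show ?thesis
      using z11 w1[of 1] unfolding W_def Z_def by auto
  qed
  moreover have "\<not> (eval2 (A^2) a 1 = 0 \<and> eval2 Q a 1 = 0)" for a
    using F_scalar_no_common_zero[of "eval2 z a 1" "eval2 w' a 1" a] nc[of a] z01 z11 w1
    unfolding A_def Q_def by (auto simp: mult_ac)
  ultimately show "admissible_pair (pair_div (Fmap F) (T2^2)) (4 * e)"
    unfolding pd admissible_pair_def A_def Q_def using e z10 z01 by simp
qed

lemma hom_lift_dehom:
  assumes "hom_lift (z, w) c" and "c \<noteq> 0" "c \<noteq> 1" "c \<noteq> Fract [:0, 1:] 1"
  shows "dehom z \<noteq> 0" and "dehom w \<noteq> 0" and "dehom w \<noteq> dehom z" and "[:0, 1:] * dehom w \<noteq> dehom z"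
proof -
  have w: "dehom w \<noteq> 0" and c: "c = Fract (dehom z) (dehom w)"
    using assms(1) unfolding hom_lift_def by auto
  show "dehom w \<noteq> 0"
    by (fact w)
  show "dehom z \<noteq> 0"
    using assms(2) c by (auto simp: Zero_fract_def eq_fract)
  show "dehom w \<noteq> dehom z"
    using assms(3) c w by (auto simp: One_fract_def eq_fract)
  show "[:0, 1:] * dehom w \<noteq> dehom z"
    using assms(4) c w by (auto simp: eq_fract)
qed

lemma first_iterate_admissible:
  assumes lift: "hom_lift C c" and c: "c \<noteq> 0" "c \<noteq> 1" "c \<noteq> Fract [:0, 1:] 1"
  shows "admissible_pair (Fiter C 1) (hdeg (Fiter C 1))" and "hdeg (Fiter C 1) \<ge> 2"
proof -
  obtain z w where C: "C = (z, w)"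
    by (cases C)
  obtain k where hz: "homogeneous z k" and hw: "homogeneous w k" and cop: "coprime z w"
    using lift unfolding hom_lift_def C by auto
  note nz = hom_lift_dehom[OF lift[unfolded C] c]
  obtain P Q where PQ: "Fmap C = (P, Q)"
    by (cases "Fmap C")
  have hP: "homogeneous P (4 * k + 2)" and hQ: "homogeneous Q (4 * k + 2)"
    using homogeneous_Fmap[OF hz hw] unfolding C[symmetric] PQ by simp_all
  have dP: "dehom P = ([:0, 1:] * dehom w^2 - dehom z^2)^2"
    and dQ: "dehom Q = 4 * dehom z * dehom w * (dehom w - dehom z) * ([:0, 1:] * dehom w - dehom z)"
    using PQ unfolding C Fmap_def Let_def by auto
  have "Q \<noteq> 0"
    using dQ nz by auto
  define g where "g = gcd P Q"
  define P1 Q1 where "P1 = P div g" and "Q1 = Q div g"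
  have P: "P = g * P1" and Q: "Q = g * Q1"
    unfolding P1_def Q1_def g_def by simp_all
  obtain d where hP1: "homogeneous P1 d" and hQ1: "homogeneous Q1 d" and cop1: "coprime P1 Q1"
    using homogeneous_div_gcd[OF hP hQ \<open>Q \<noteq> 0\<close>] unfolding P1_def Q1_def g_def by blast
  have F1: "Fiter C 1 = (P1, Q1)"
    unfolding P1_def Q1_def g_def by (simp add: PQ pair_div_def pgcd_def)
  have ncz: "\<And>a. \<not> (poly (dehom z) a = 0 \<and> poly (dehom w) a = 0)"
    using coprime_forms_no_common_root[OF hz hw cop] by blast
  have ncpq: "\<And>a. \<not> (poly (dehom P1) a = 0 \<and> poly (dehom Q1) a = 0)"
    using coprime_forms_no_common_root[OF hP1 hQ1 cop1] by blast
  note red = F_reduced[OF nz ncz, of "dehom g" "dehom P1" "dehom Q1"]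
  have less: "degree (dehom Q1) < degree (dehom P1)" and p0: "poly (dehom P1) 0 \<noteq> 0"
    and p1: "poly (dehom P1) 1 \<noteq> poly (dehom Q1) 1" and deg2: "2 \<le> degree (dehom P1)"
    using red ncpq dP dQ P Q by simp_all
  note deg = coprime_forms_degree[OF hP1 hQ1 cop1 less]
  have "admissible_pair (Fiter C 1) d"
    unfolding F1 admissible_pair_def
    using hP1 hQ1 deg deg2 p0 p1 ncpq eval2_1_0[OF hP1] eval2_1_0[OF hQ1]
    by (auto simp: eval2_dehom)
  moreover have "hdeg (Fiter C 1) = d"
    unfolding F1 using hP1 hQ1 deg2 by (intro hdeg_eqI) (auto simp: hom_pair_def)
  ultimately show "admissible_pair (Fiter C 1) (hdeg (Fiter C 1))" "hdeg (Fiter C 1) \<ge> 2"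
    using deg deg2 by simp_all
qed

lemma admissible_pair_hresultant:
  assumes adm: "admissible_pair G e"
  shows "hom_pair G e" and "hdeg G = e" and "hresultant G \<noteq> 0"
proof -
  have hf: "homogeneous (fst G) e" and hs: "homogeneous (snd G) e"
    and top: "coeff (dehom (fst G)) e \<noteq> 0"
    and nc: "\<And>a. \<not> (poly (dehom (fst G)) a = 0 \<and> poly (dehom (snd G)) a = 0)"
    using adm eval2_1_0 unfolding admissible_pair_def eval2_dehom by auto
  show hp: "hom_pair G e"
    unfolding hom_pair_def using hf hs top by (metis dehom_0 coeff_0 fst_conv)
  show hd: "hdeg G = e"
    by (rule hdeg_eqI[OF hp])
  have "degree (dehom (fst G)) = e"
    using degree_dehom_le[OF hf] le_degree[OF top] by simp
  then show "hresultant G \<noteq> 0"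
    unfolding hresultant_def hd using top nc degree_dehom_le[OF hs]
    by (intro det_sylvester_mat_sub_nonzero) auto
qed

theorem proposition3p1:
  fixes C :: "bipoly \<times> bipoly" and c :: "complex poly fract"
  assumes lift: "hom_lift C c"
    and c_ne: "c \<noteq> 0" "c \<noteq> 1" "c \<noteq> Fract [:0, 1:] 1"
  defines "F1 \<equiv> Fiter C 1"
  defines "d \<equiv> hdeg F1"
  shows "hom_pair F1 d \<and> d \<ge> 2 \<and>
         eval2 (fst F1) 0 1 \<noteq> 0 \<and> eval2 (fst F1) 1 0 \<noteq> 0 \<and>
         eval2 (fst F1) 1 1 \<noteq> eval2 (snd F1) 1 1 \<and> eval2 (snd F1) 1 0 = 0 \<and>
         (\<forall>n\<ge>1. T2^2 dvd fst (Fmap (Fiter C n)) \<and> T2^2 dvd snd (Fmap (Fiter C n)) \<and>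
                 hom_pair (Fiter C (n + 1)) (4^n * d) \<and>
                 hdeg (Fiter C (n + 1)) = 4^n * d \<and>
                 hresultant (Fiter C (n + 1)) \<noteq> 0)"
proof -
  have F1: "admissible_pair F1 d" "d \<ge> 2"
    using first_iterate_admissible[OF lift c_ne] unfolding F1_def d_def by simp_all
  have iterates: "admissible_pair (Fiter C (Suc m)) (4^m * d)" for m
  proof (induct m)
    case (Suc m)
    then show ?case
      using admissible_pair_Fmap(3)[OF Suc] by (simp add: mult.assoc)
  qed (use F1 F1_def in simp)
  have "T2^2 dvd fst (Fmap (Fiter C n)) \<and> T2^2 dvd snd (Fmap (Fiter C n)) \<and>
        hom_pair (Fiter C (n + 1)) (4^n * d) \<and> hdeg (Fiter C (n + 1)) = 4^n * d \<and>
        hresultant (Fiter C (n + 1)) \<noteq> 0" if "n \<ge> 1" for n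
    using that admissible_pair_Fmap(1,2)[OF iterates[of "n - 1"]]
      admissible_pair_hresultant[OF iterates[of n]] by simp
  then show ?thesis
    using F1 admissible_pair_hresultant(1)[OF F1(1)] unfolding admissible_pair_def by blast
qed

end
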